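(* Let $\mathfrak A,\mathfrak B\in K_{\overline\alpha}$ with $\mathfrak A\le\mathfrak B$. Assume $(\mathfrak B,\mathfrak C)$ is an essential minimal pair and let $\gamma=-\delta(\mathfrak C/\mathfrak B)$. Then: (1) there is $\mathfrak D\in K_{\overline\alpha}$ with $\mathfrak B\subseteq\mathfrak D$, $\mathfrak A\le\mathfrak D$ and $0\le\delta(\mathfrak D/\mathfrak A)<\gamma$, such that moreover, for every minimal pair $(\mathfrak B,\mathfrak G)$ with $|G|<|C|$, $\mathfrak G$ does not embed into $\mathfrak D$ over $\mathfrak B$; (2) if $\delta(\mathfrak A)\ge\gamma$, then there is $\mathfrak D\in K_{\overline\alpha}$ with $\mathfrak B\subseteq\mathfrak D$ such that $(\mathfrak A,\mathfrak D)$ is an essential minimal pair satisfying $0>\delta(\mathfrak D/\mathfrak A)\ge-\gamma$.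
   Context: Fix a finite relational language $L$ in which every relation symbol has arity at least $2$. $K_L$ is the class of all finite $L$-structures (including the empty one) in which every relation symbol is interpreted symmetrically and irreflexively. Fix $\overline\alpha:L\to(0,1]$, writing $\overline\alpha_E=\overline\alpha(E)$, such that it is not the case that all symbols of $L$ are binary and $\overline\alpha_E=1$ for all $E$. For $\mathfrak A\in K_L$ let $N_E(\mathfrak A)$ be the number of subsets of $A$ on which $E$ holds and $\delta(\mathfrak A)=|A|-\sum_{E}\overline\alpha_E N_E(\mathfrak A)$. $K_{\overline\alpha}=\{\mathfrak A\in K_L:\delta(\mathfrak A')\ge0\text{ for all substructures }\mathfrak A'\subseteq\mathfrak A\}$. Subsets are identified with induced substructures; for substructures $X,Y$ of a common structure, $\delta(X/Y)=\delta(X\cup Y)-\delta(Y)$. For $\mathfrak A\subseteq\mathfrak B$, $\mathfrak A\le\mathfrak B$ means $\delta(\mathfrak A)\le\delta(\mathfrak A')$ for all $\mathfrak A\subseteq\mathfrak A'\subseteq\mathfrak B$; $(\mathfrak A,\mathfrak B)$ is a minimal pair if $\mathfrak A\subseteq\mathfrak B$, $\mathfrak A\le\mathfrak C$ for all $\mathfrak A\subseteq\mathfrak C\subsetneq\mathfrak B$, but $\mathfrak A\not\le\mathfrak B$. For $\mathfrak B\in K_{\overline\alpha}$ with $\delta(\mathfrak B)>0$, a structure $\mathfrak D\in K_{\overline\alpha}$ with $\mathfrak B\subseteq\mathfrak D$ forms an essential minimal pair $(\mathfrak B,\mathfrak D)$ if $(\mathfrak B,\mathfrak D)$ is a minimal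 pair and $\delta(\mathfrak D'/\mathfrak D'\cap\mathfrak B)\ge0$ for every substructure $\mathfrak D'\subsetneq\mathfrak D$. *)

theory Defs
  imports Complex_Main
begin

text \<open>A finite L-structure with symmetric irreflexive relations: a universe together with,
for each relation symbol E, the set of (arity E)-element subsets of the universe on which E holds.\<close>

type_synonym ('a, 'l) struct = "'a set \<times> ('l \<Rightarrow> 'a set set)"

definition univ :: "('a, 'l) struct \<Rightarrow> 'a set" where
  "univ M = fst M"

definition rel :: "('a, 'l) struct \<Rightarrow> 'l \<Rightarrow> 'a set set" where
  "rel M = snd M"

definition in_KL :: "('l \<Rightarrow> nat) \<Rightarrow> ('a, 'l) struct \<Rightarrow> bool" where
  "in_KL ar M \<longleftrightarrow> finite (univ M) \<and>
     (\<forall>E. rel M E \<subseteq> {S. S \<subseteq> univ M \<and> card S = ar E})"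

definition induced :: "('a, 'l) struct \<Rightarrow> 'a set \<Rightarrow> ('a, 'l) struct" where
  "induced M X = (X, \<lambda>E. {S \<in> rel M E. S \<subseteq> X})"

definition substr :: "('a, 'l) struct \<Rightarrow> ('a, 'l) struct \<Rightarrow> bool" where
  "substr N M \<longleftrightarrow> univ N \<subseteq> univ M \<and> N = induced M (univ N)"

definition N_E :: "('a, 'l) struct \<Rightarrow> 'l \<Rightarrow> nat" where
  "N_E M E = card (rel M E)"

definition delta :: "('l::finite \<Rightarrow> real) \<Rightarrow> ('a, 'l) struct \<Rightarrow> real" where
  "delta \<alpha> M = real (card (univ M)) - (\<Sum>E\<in>UNIV. \<alpha> E * real (N_E M E))"

definition delta_rel :: "('l::finite \<Rightarrow> real) \<Rightarrow> ('a, 'l) struct \<Rightarrow> 'a set \<Rightarrow> 'a set \<Rightarrow> real" where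
  "delta_rel \<alpha> M X Y = delta \<alpha> (induced M (X \<union> Y)) - delta \<alpha> (induced M Y)"

definition in_K_alpha :: "('l \<Rightarrow> nat) \<Rightarrow> ('l::finite \<Rightarrow> real) \<Rightarrow> ('a, 'l) struct \<Rightarrow> bool" where
  "in_K_alpha ar \<alpha> M \<longleftrightarrow> in_KL ar M \<and> (\<forall>X \<subseteq> univ M. delta \<alpha> (induced M X) \<ge> 0)"

definition strong :: "('l::finite \<Rightarrow> real) \<Rightarrow> ('a, 'l) struct \<Rightarrow> ('a, 'l) struct \<Rightarrow> bool" where
  "strong \<alpha> A B \<longleftrightarrow> substr A B \<and>
     (\<forall>X. univ A \<subseteq> X \<and> X \<subseteq> univ B \<longrightarrow> delta \<alpha> A \<le> delta \<alpha> (induced B X))"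

definition minimal_pair :: "('l::finite \<Rightarrow> real) \<Rightarrow> ('a, 'l) struct \<Rightarrow> ('a, 'l) struct \<Rightarrow> bool" where
  "minimal_pair \<alpha> A B \<longleftrightarrow> substr A B \<and>
     (\<forall>X. univ A \<subseteq> X \<and> X \<subset> univ B \<longrightarrow> strong \<alpha> A (induced B X)) \<and>
     \<not> strong \<alpha> A B"

definition essential_minimal_pair ::
  "('l \<Rightarrow> nat) \<Rightarrow> ('l::finite \<Rightarrow> real) \<Rightarrow> ('a, 'l) struct \<Rightarrow> ('a, 'l) struct \<Rightarrow> bool" where
  "essential_minimal_pair ar \<alpha> B D \<longleftrightarrow>
     in_K_alpha ar \<alpha> B \<and> delta \<alpha> B > 0 \<and> in_K_alpha ar \<alpha> D \<and> substr B D \<and>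
     minimal_pair \<alpha> B D \<and>
     (\<forall>X. X \<subset> univ D \<longrightarrow> delta_rel \<alpha> D X (X \<inter> univ B) \<ge> 0)"

definition embeds_over ::
  "('l \<Rightarrow> nat) \<Rightarrow> ('a, 'l) struct \<Rightarrow> ('a, 'l) struct \<Rightarrow> ('a, 'l) struct \<Rightarrow> bool" where
  "embeds_over ar B G D \<longleftrightarrow> (\<exists>f. inj_on f (univ G) \<and> f ` univ G \<subseteq> univ D \<and>
     (\<forall>b\<in>univ B. f b = b) \<and>
     (\<forall>E S. S \<subseteq> univ G \<and> card S = ar E \<longrightarrow> (S \<in> rel G E \<longleftrightarrow> f ` S \<in> rel D E)))"

end

theory Submission
  imports Defs
begin

(* Let \<gamma> = \<delta>(B) - \<delta>(C) > 0. The free amalgam D_k of k copies of C over B has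
   \<delta>(D_k) = \<delta>(B) - k\<gamma>. Because (B, C) is a minimal pair, every X with B \<subseteq> X \<subseteq> D_k
   has \<delta>(X) \<ge> \<delta>(D_k), even \<delta>(X) \<ge> \<delta>(D_k) + \<gamma> if X is proper, and \<delta>(X) < \<delta>(B)
   only if X contains a whole copy of C; because the pair is essential, a set not
   containing B loses no predimension against its trace on B. Choosing k with
   k\<gamma> \<le> \<delta>(B) - \<delta>(A) < (k+1)\<gamma>, D_k witnesses (1) and D_(k+1) witnesses (2), where the
   essentiality of (A, D_(k+1)) off B follows from the submodularity of \<delta> on B. *)

lemma univ_induced [simp]: "univ (induced M X) = X"
  by (simp add: univ_def induced_def)

lemma rel_induced [simp]: "rel (induced M X) E = {S \<in> rel M E. S \<subseteq> X}"
  by (simp add: rel_def induced_def)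

lemma struct_eqI: "univ M = univ N \<Longrightarrow> (\<And>E. rel M E = rel N E) \<Longrightarrow> M = N"
  by (cases M, cases N) (auto simp: univ_def rel_def)

lemma induced_induced: "Y \<subseteq> X \<Longrightarrow> induced (induced M X) Y = induced M Y"
  by (rule struct_eqI) auto

lemma in_KL_finite: "in_KL ar M \<Longrightarrow> finite (univ M)"
  unfolding in_KL_def by blast

lemma in_KL_rel_Pow: "in_KL ar M \<Longrightarrow> rel M E \<subseteq> Pow (univ M)"
  unfolding in_KL_def by blast

lemma in_KL_card_rel: "in_KL ar M \<Longrightarrow> S \<in> rel M E \<Longrightarrow> card S = ar E"
  unfolding in_KL_def by blast

lemma induced_univ_in_KL: "in_KL ar M \<Longrightarrow> induced M (univ M) = M"
  by (rule struct_eqI) (auto dest: in_KL_rel_Pow)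

lemma substr_univ_subset: "substr B M \<Longrightarrow> univ B \<subseteq> univ M"
  unfolding substr_def by blast

lemma substr_induced_univ: "substr B M \<Longrightarrow> induced M (univ B) = B"
  unfolding substr_def by simp

lemma substr_rel: "substr B M \<Longrightarrow> rel B E = {S \<in> rel M E. S \<subseteq> univ B}"
  unfolding substr_def by (metis rel_induced)

lemma substr_induced: "substr B M \<Longrightarrow> Z \<subseteq> univ B \<Longrightarrow> induced M Z = induced B Z"
  unfolding substr_def by (metis induced_induced)

lemma substr_refl: "in_KL ar M \<Longrightarrow> substr M M"
  unfolding substr_def by (simp add: induced_univ_in_KL)

lemma substr_trans: "substr A B \<Longrightarrow> substr B M \<Longrightarrow> substr A M"
  unfolding substr_def by (metis induced_induced order_trans)

lemma substr_induced_between: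
  "substr A M \<Longrightarrow> univ A \<subseteq> X \<Longrightarrow> substr A (induced M X)"
  unfolding substr_def by (simp add: induced_induced)

lemma in_K_alpha_delta_nonneg: "in_K_alpha ar \<alpha> M \<Longrightarrow> 0 \<le> delta \<alpha> M"
  unfolding in_K_alpha_def by (metis induced_univ_in_KL order_refl)

lemma delta_induced:
  "delta \<alpha> (induced M X) = real (card X) - (\<Sum>E\<in>UNIV. \<alpha> E * real (card {S \<in> rel M E. S \<subseteq> X}))"
  by (simp add: delta_def N_E_def)

lemma delta_rel_univ:
  "in_KL ar D \<Longrightarrow> substr A D \<Longrightarrow> delta_rel \<alpha> D (univ D) (univ A) = delta \<alpha> D - delta \<alpha> A"
  unfolding delta_rel_def
  by (simp add: Un_absorb2 substr_univ_subset substr_induced_univ induced_univ_in_KL)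

lemma delta_free_split:
  assumes fin: "finite X" and cover: "X \<subseteq> U \<union> V"
    and free: "\<And>E S. S \<in> rel M E \<Longrightarrow> S \<subseteq> X \<Longrightarrow> S \<subseteq> U \<or> S \<subseteq> V"
  shows "delta \<alpha> (induced M X) =
    delta \<alpha> (induced M (X \<inter> U)) + delta \<alpha> (induced M (X \<inter> V)) - delta \<alpha> (induced M (X \<inter> U \<inter> V))"
proof -
  have "card (X \<inter> U) + card (X \<inter> V) = card ((X \<inter> U) \<union> (X \<inter> V)) + card ((X \<inter> U) \<inter> (X \<inter> V))"
    using fin by (intro card_Un_Int) auto
  moreover have "(X \<inter> U) \<union> (X \<inter> V) = X" "(X \<inter> U) \<inter> (X \<inter> V) = X \<inter> U \<inter> V"
    using cover by auto
  ultimately have points: "real (card X) =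
      real (card (X \<inter> U)) + real (card (X \<inter> V)) - real (card (X \<inter> U \<inter> V))"
    by simp
  have rels: "real (card {S \<in> rel M E. S \<subseteq> X}) =
      real (card {S \<in> rel M E. S \<subseteq> X \<inter> U}) + real (card {S \<in> rel M E. S \<subseteq> X \<inter> V})
      - real (card {S \<in> rel M E. S \<subseteq> X \<inter> U \<inter> V})" for E
  proof -
    let ?P = "{S \<in> rel M E. S \<subseteq> X \<inter> U}" and ?Q = "{S \<in> rel M E. S \<subseteq> X \<inter> V}"
    have "finite ?P" "finite ?Q"
      using fin by (auto intro: finite_subset[of _ "Pow X"])
    then have "card ?P + card ?Q = card (?P \<union> ?Q) + card (?P \<inter> ?Q)"
      by (rule card_Un_Int)
    moreover have "?P \<union> ?Q = {S \<in> rel M E. S \<subseteq> X}"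
      using free by auto
    moreover have "?P \<inter> ?Q = {S \<in> rel M E. S \<subseteq> X \<inter> U \<inter> V}"
      by auto
    ultimately show ?thesis by simp
  qed
  show ?thesis
    unfolding delta_induced points rels
    by (simp add: algebra_simps sum.distrib sum_subtractf)
qed

lemma delta_submodular:
  assumes nonneg: "\<And>E. 0 \<le> \<alpha> E" and fin: "finite X" "finite Y"
  shows "delta \<alpha> (induced M (X \<union> Y)) + delta \<alpha> (induced M (X \<inter> Y))
    \<le> delta \<alpha> (induced M X) + delta \<alpha> (induced M Y)"
proof -
  have points: "card X + card Y = card (X \<union> Y) + card (X \<inter> Y)"
    using fin by (rule card_Un_Int)
  have rels: "real (card {S \<in> rel M E. S \<subseteq> X}) + real (card {S \<in> rel M E. S \<subseteq> Y})
      \<le> real (card {S \<in> rel M E. S \<subseteq> X \<union> Y}) + real (card {S \<in> rel M E. S \<subseteq> X \<inter> Y})" for E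
  proof -
    let ?P = "{S \<in> rel M E. S \<subseteq> X}" and ?Q = "{S \<in> rel M E. S \<subseteq> Y}"
    have fin_rels: "finite ?P" "finite ?Q" "finite {S \<in> rel M E. S \<subseteq> X \<union> Y}"
      using fin by (auto intro: finite_subset[of _ "Pow (X \<union> Y)"])
    then have "card ?P + card ?Q = card (?P \<union> ?Q) + card (?P \<inter> ?Q)"
      by (intro card_Un_Int)
    moreover have "card (?P \<union> ?Q) \<le> card {S \<in> rel M E. S \<subseteq> X \<union> Y}"
      using fin_rels by (intro card_mono) auto
    moreover have "?P \<inter> ?Q = {S \<in> rel M E. S \<subseteq> X \<inter> Y}"
      by auto
    ultimately show ?thesis
      by (simp only: of_nat_add[symmetric] of_nat_le_iff)
  qed
  have "(\<Sum>E\<in>UNIV. \<alpha> E * real (card {S \<in> rel M E. S \<subseteq> X}))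
      + (\<Sum>E\<in>UNIV. \<alpha> E * real (card {S \<in> rel M E. S \<subseteq> Y}))
    \<le> (\<Sum>E\<in>UNIV. \<alpha> E * real (card {S \<in> rel M E. S \<subseteq> X \<union> Y}))
      + (\<Sum>E\<in>UNIV. \<alpha> E * real (card {S \<in> rel M E. S \<subseteq> X \<inter> Y}))"
    unfolding sum.distrib[symmetric] distrib_left[symmetric]
    by (intro sum_mono mult_left_mono rels nonneg)
  then show ?thesis
    unfolding delta_induced using points by simp
qed

lemma delta_image:
  assumes inj: "inj_on f U" and "Y \<subseteq> U" and rels_in: "\<And>E. {S \<in> rel M E. S \<subseteq> Y} \<subseteq> Pow U"
    and rels_image: "\<And>E. {S \<in> rel M' E. S \<subseteq> f ` Y} = (`) f ` {S \<in> rel M E. S \<subseteq> Y}"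
  shows "delta \<alpha> (induced M' (f ` Y)) = delta \<alpha> (induced M Y)"
proof -
  have "card (f ` Y) = card Y"
    using inj \<open>Y \<subseteq> U\<close> by (meson card_image inj_on_subset)
  moreover have "card {S \<in> rel M' E. S \<subseteq> f ` Y} = card {S \<in> rel M E. S \<subseteq> Y}" for E
    unfolding rels_image by (rule card_image, rule inj_on_subset[OF inj_on_image_Pow[OF inj] rels_in])
  ultimately show ?thesis
    unfolding delta_induced by simp
qed

lemma strongD:
  "strong \<alpha> A B \<Longrightarrow> univ A \<subseteq> X \<Longrightarrow> X \<subseteq> univ B \<Longrightarrow> delta \<alpha> A \<le> delta \<alpha> (induced B X)"
  unfolding strong_def by blast

lemma strong_substr: "strong \<alpha> A B \<Longrightarrow> substr A B"
  unfolding strong_def by blast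

lemma strong_univ_subset: "strong \<alpha> A B \<Longrightarrow> univ A \<subseteq> univ B"
  by (rule substr_univ_subset[OF strong_substr])

lemma strong_delta_le: "in_KL ar B \<Longrightarrow> strong \<alpha> A B \<Longrightarrow> delta \<alpha> A \<le> delta \<alpha> B"
  using strongD[of \<alpha> A B "univ B"] by (simp add: strong_univ_subset induced_univ_in_KL)

lemma not_strongE:
  assumes "substr A B" "\<not> strong \<alpha> A B"
  obtains X where "univ A \<subseteq> X" "X \<subseteq> univ B" "delta \<alpha> (induced B X) < delta \<alpha> A"
  using assms unfolding strong_def by (auto simp: not_le)

lemma minimal_pair_proper:
  assumes "minimal_pair \<alpha> B C" "univ B \<subseteq> Y" "Y \<subset> univ C"
  shows "delta \<alpha> B \<le> delta \<alpha> (induced C Y)"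
proof -
  have "strong \<alpha> B (induced C Y)"
    using assms unfolding minimal_pair_def by blast
  then have "delta \<alpha> B \<le> delta \<alpha> (induced (induced C Y) Y)"
    using assms(2) by (intro strongD) auto
  then show ?thesis
    by (simp add: induced_induced)
qed

lemma minimal_pair_delta_less:
  assumes "in_KL ar C" "minimal_pair \<alpha> B C"
  shows "delta \<alpha> C < delta \<alpha> B"
proof -
  have "substr B C" "\<not> strong \<alpha> B C"
    using assms(2) unfolding minimal_pair_def by blast+
  then obtain X where X: "univ B \<subseteq> X" "X \<subseteq> univ C" "delta \<alpha> (induced C X) < delta \<alpha> B"
    by (rule not_strongE)
  have "\<not> X \<subset> univ C"
    using minimal_pair_proper[OF assms(2) X(1)] X(3) by (auto simp: not_le)
  then have "X = univ C"
    using X(2) by blast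
  then show ?thesis
    using X(3) by (simp add: induced_univ_in_KL[OF assms(1)])
qed

lemma minimal_pairI:
  assumes "in_KL ar D" "substr A D"
    and proper: "\<And>X. univ A \<subseteq> X \<Longrightarrow> X \<subset> univ D \<Longrightarrow> delta \<alpha> A \<le> delta \<alpha> (induced D X)"
    and "delta \<alpha> D < delta \<alpha> A"
  shows "minimal_pair \<alpha> A D"
  unfolding minimal_pair_def
proof (intro conjI allI impI)
  fix X assume X: "univ A \<subseteq> X \<and> X \<subset> univ D"
  have "delta \<alpha> A \<le> delta \<alpha> (induced (induced D X) Y)" if "univ A \<subseteq> Y" "Y \<subseteq> X" for Y
    using X that proper[of Y] by (auto simp: induced_induced)
  then show "strong \<alpha> A (induced D X)"
    unfolding strong_def using X \<open>substr A D\<close> by (simp add: substr_induced_between)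
next
  show "\<not> strong \<alpha> A D"
    using assms(1,2,4) strongD[of \<alpha> A D "univ D"]
    by (auto simp: induced_univ_in_KL substr_univ_subset)
qed fact

lemma essential_minimal_pair_gap:
  assumes "essential_minimal_pair ar \<alpha> B C"
  shows "- delta_rel \<alpha> C (univ C) (univ B) = delta \<alpha> B - delta \<alpha> C" "delta \<alpha> C < delta \<alpha> B"
proof -
  have "in_KL ar C" "substr B C" "minimal_pair \<alpha> B C"
    using assms unfolding essential_minimal_pair_def in_K_alpha_def by blast+
  then show "- delta_rel \<alpha> C (univ C) (univ B) = delta \<alpha> B - delta \<alpha> C" "delta \<alpha> C < delta \<alpha> B"
    using delta_rel_univ minimal_pair_delta_less by (metis minus_diff_eq)+
qed

lemma essential_minimal_pair_inter:
  assumes "essential_minimal_pair ar \<alpha> B C" "Y \<subset> univ C"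
  shows "delta \<alpha> (induced C (Y \<inter> univ B)) \<le> delta \<alpha> (induced C Y)"
  using assms unfolding essential_minimal_pair_def delta_rel_def
  by (simp add: Un_absorb2)

lemma embeds_overE:
  assumes "embeds_over ar B G D"
  obtains f where "inj_on f (univ G)" "f ` univ G \<subseteq> univ D" "\<forall>b\<in>univ B. f b = b"
    "\<And>E S. S \<subseteq> univ G \<Longrightarrow> card S = ar E \<Longrightarrow> S \<in> rel G E \<longleftrightarrow> f ` S \<in> rel D E"
  using assms unfolding embeds_over_def by metis

lemma embeds_over_image:
  assumes "in_KL ar G" "in_KL ar D" "embeds_over ar B G D" "univ B \<subseteq> X" "X \<subseteq> univ G"
  obtains Y where "univ B \<subseteq> Y" "Y \<subseteq> univ D" "card Y = card X"
    "delta \<alpha> (induced D Y) = delta \<alpha> (induced G X)"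
proof -
  obtain f where inj: "inj_on f (univ G)" and into: "f ` univ G \<subseteq> univ D"
    and fixes_B: "\<forall>b\<in>univ B. f b = b"
    and rels: "\<And>E S. S \<subseteq> univ G \<Longrightarrow> card S = ar E \<Longrightarrow> S \<in> rel G E \<longleftrightarrow> f ` S \<in> rel D E"
    using assms(3) by (elim embeds_overE) blast
  have rels_image: "{S \<in> rel D E. S \<subseteq> f ` X} = (`) f ` {S \<in> rel G E. S \<subseteq> X}" for E
  proof (intro equalityI subsetI)
    fix S assume S: "S \<in> {S \<in> rel D E. S \<subseteq> f ` X}"
    define T where "T = X \<inter> f -` S"
    have T: "f ` T = S" "T \<subseteq> X" "T \<subseteq> univ G"
      using S assms(5) unfolding T_def by auto
    have "card T = card S"
      using T inj by (metis card_image inj_on_subset)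
    also have "\<dots> = ar E"
      using S in_KL_card_rel[OF assms(2)] by blast
    finally have "T \<in> rel G E"
      using rels[OF T(3)] S T(1) by blast
    then show "S \<in> (`) f ` {S \<in> rel G E. S \<subseteq> X}"
      using T by blast
  next
    fix S assume "S \<in> (`) f ` {S \<in> rel G E. S \<subseteq> X}"
    then obtain T where T: "T \<in> rel G E" "T \<subseteq> X" "S = f ` T"
      by blast
    have "T \<subseteq> univ G" "card T = ar E"
      using T(1) in_KL_rel_Pow[OF assms(1)] in_KL_card_rel[OF assms(1)] by blast+
    then have "f ` T \<in> rel D E"
      using rels T(1) by blast
    then show "S \<in> {S \<in> rel D E. S \<subseteq> f ` X}"
      using T by blast
  qed
  have "{S \<in> rel G E. S \<subseteq> X} \<subseteq> Pow (univ G)" for E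
    using in_KL_rel_Pow[OF assms(1)] by blast
  then have "delta \<alpha> (induced D (f ` X)) = delta \<alpha> (induced G X)"
    using delta_image[OF inj assms(5)] rels_image by blast
  moreover have "univ B \<subseteq> f ` X"
    using fixes_B assms(4) by force
  moreover have "f ` X \<subseteq> univ D"
    using into assms(5) by blast
  moreover have "card (f ` X) = card X"
    using inj assms(5) by (meson card_image inj_on_subset)
  ultimately show ?thesis
    using that[of "f ` X"] by simp
qed

lemma exists_fresh_copy:
  fixes Bs Cs U :: "'a set"
  assumes "infinite (UNIV :: 'a set)" and "Bs \<subseteq> Cs" "Bs \<subseteq> U" "finite Cs" "finite U"
  shows "\<exists>g. inj_on g Cs \<and> (\<forall>b\<in>Bs. g b = b) \<and> g ` Cs \<inter> U = Bs"
proof -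
  have "infinite (- U)"
    using assms(1,5) by (simp add: Compl_eq_Diff_UNIV Diff_infinite_finite)
  then obtain T where T: "T \<subseteq> - U" "finite T" "card T = card (Cs - Bs)"
    using infinite_arbitrarily_large by blast
  then obtain h where h: "bij_betw h (Cs - Bs) T"
    using finite_same_card_bij[of "Cs - Bs" T] assms(4) by auto
  define g where "g x = (if x \<in> Bs then x else h x)" for x
  have hU: "h x \<notin> U" if "x \<in> Cs - Bs" for x
    using h T(1) that by (auto simp: bij_betw_def)
  have "inj_on g Cs"
    using h hU assms(3) by (auto simp: inj_on_def g_def bij_betw_def)
  moreover have "g ` Cs \<inter> U = Bs"
    using hU assms(2,3) by (auto simp: g_def image_iff)
  moreover have "\<forall>b\<in>Bs. g b = b"
    by (simp add: g_def)
  ultimately show ?thesis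
    by blast
qed

definition free_amalgam :: "('a, 'l) struct \<Rightarrow> ('a, 'l) struct \<Rightarrow> ('a \<Rightarrow> 'a) \<Rightarrow> ('a, 'l) struct" where
  "free_amalgam D C g = (univ D \<union> g ` univ C, \<lambda>E. rel D E \<union> (`) g ` rel C E)"

lemma univ_free_amalgam [simp]: "univ (free_amalgam D C g) = univ D \<union> g ` univ C"
  by (simp add: free_amalgam_def univ_def)

lemma rel_free_amalgam [simp]: "rel (free_amalgam D C g) E = rel D E \<union> (`) g ` rel C E"
  by (simp add: free_amalgam_def rel_def)

locale fresh_copy =
  fixes ar :: "'l::finite \<Rightarrow> nat" and B C D :: "('a, 'l) struct" and g :: "'a \<Rightarrow> 'a"
  assumes in_KL_C: "in_KL ar C" and substr_B_C: "substr B C"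
    and in_KL_D: "in_KL ar D" and substr_B_D: "substr B D"
    and inj_g: "inj_on g (univ C)" and g_fixes_B: "\<forall>b\<in>univ B. g b = b"
    and g_fresh: "g ` univ C \<inter> univ D = univ B"
begin

lemma B_subset_C: "univ B \<subseteq> univ C"
  using substr_B_C by (rule substr_univ_subset)

lemma B_subset_D: "univ B \<subseteq> univ D"
  using substr_B_D by (rule substr_univ_subset)

lemma g_image_B: "S \<subseteq> univ B \<Longrightarrow> g ` S = S"
  using g_fixes_B by (force simp: image_iff)

lemma rel_copy_in_D:
  assumes "S \<in> rel C E" "g ` S \<subseteq> univ D"
  shows "S \<in> rel D E" "g ` S = S"
proof -
  have "S \<subseteq> univ C"
    using assms(1) in_KL_rel_Pow[OF in_KL_C] by blast
  have "S \<subseteq> univ B"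
  proof
    fix x assume "x \<in> S"
    then have "g x \<in> univ B" "x \<in> univ C"
      using assms(2) g_fresh \<open>S \<subseteq> univ C\<close> by blast+
    moreover have "g (g x) = g x"
      using \<open>g x \<in> univ B\<close> g_fixes_B by blast
    ultimately have "g x = x"
      using inj_onD[OF inj_g] B_subset_C by blast
    then show "x \<in> univ B"
      using \<open>g x \<in> univ B\<close> by simp
  qed
  then have "S \<in> rel B E"
    using assms(1) by (simp add: substr_rel[OF substr_B_C])
  then show "S \<in> rel D E"
    by (simp add: substr_rel[OF substr_B_D])
  show "g ` S = S"
    using \<open>S \<subseteq> univ B\<close> by (rule g_image_B)
qed

lemma in_KL_amalgam: "in_KL ar (free_amalgam D C g)"
  unfolding in_KL_def
proof (intro conjI allI subsetI)
  show "finite (univ (free_amalgam D C g))"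
    using in_KL_finite[OF in_KL_C] in_KL_finite[OF in_KL_D] by simp
next
  fix E S assume "S \<in> rel (free_amalgam D C g) E"
  then consider "S \<in> rel D E" | T where "T \<in> rel C E" "S = g ` T"
    by auto
  then show "S \<in> {S. S \<subseteq> univ (free_amalgam D C g) \<and> card S = ar E}"
  proof cases
    case 1
    then show ?thesis
      using in_KL_D unfolding in_KL_def by auto
  next
    case 2
    then have "T \<subseteq> univ C"
      using in_KL_rel_Pow[OF in_KL_C] by blast
    then have "card S = card T"
      using 2 inj_g by (simp add: card_image inj_on_subset)
    then show ?thesis
      using 2 in_KL_card_rel[OF in_KL_C] \<open>T \<subseteq> univ C\<close> by auto
  qed
qed

lemma induced_amalgam_D:
  assumes "Z \<subseteq> univ D"
  shows "induced (free_amalgam D C g) Z = induced D Z"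
proof (rule struct_eqI)
  fix E
  have "g ` S \<in> rel D E" if "S \<in> rel C E" "g ` S \<subseteq> Z" for S
    using rel_copy_in_D[OF that(1)] that(2) assms by (metis subset_trans)
  then show "rel (induced (free_amalgam D C g) Z) E = rel (induced D Z) E"
    by auto
qed simp

lemma substr_B_amalgam: "substr B (free_amalgam D C g)"
  using B_subset_D induced_amalgam_D[OF B_subset_D] substr_induced_univ[OF substr_B_D]
  unfolding substr_def by auto

lemma rel_amalgam_copy:
  assumes "Y \<subseteq> univ C"
  shows "{S \<in> rel (free_amalgam D C g) E. S \<subseteq> g ` Y} = (`) g ` {S \<in> rel C E. S \<subseteq> Y}"
proof (intro equalityI subsetI)
  fix S assume S: "S \<in> {S \<in> rel (free_amalgam D C g) E. S \<subseteq> g ` Y}"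
  show "S \<in> (`) g ` {S \<in> rel C E. S \<subseteq> Y}"
  proof (cases "S \<in> rel D E")
    case True
    then have "S \<subseteq> univ B"
      using S assms g_fresh in_KL_rel_Pow[OF in_KL_D] by blast
    then have "S \<in> rel B E"
      using True by (simp add: substr_rel[OF substr_B_D])
    then have "S \<in> rel C E"
      by (simp add: substr_rel[OF substr_B_C])
    moreover have "g ` S = S"
      using \<open>S \<subseteq> univ B\<close> by (rule g_image_B)
    moreover have "S \<subseteq> Y"
    proof
      fix x assume "x \<in> S"
      then obtain y where "y \<in> Y" "x = g y"
        using S by blast
      moreover have "g x = x" "x \<in> univ C"
        using \<open>x \<in> S\<close> \<open>S \<subseteq> univ B\<close> g_fixes_B B_subset_C by blast+
      ultimately have "y = x"
        using assms inj_onD[OF inj_g, of y x] by auto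
      then show "x \<in> Y"
        using \<open>y \<in> Y\<close> by simp
    qed
    ultimately show ?thesis
      by (metis (no_types, lifting) image_eqI mem_Collect_eq)
  next
    case False
    then obtain T where T: "T \<in> rel C E" "S = g ` T"
      using S by auto
    moreover have "T \<subseteq> univ C"
      using T(1) in_KL_rel_Pow[OF in_KL_C] by blast
    then have "T \<subseteq> Y"
      using S T(2) assms inj_on_image_mem_iff[OF inj_g] by blast
    ultimately show ?thesis
      by blast
  qed
qed auto

lemma delta_amalgam:
  assumes "X \<subseteq> univ (free_amalgam D C g)"
  shows "delta \<alpha> (induced (free_amalgam D C g) X) = delta \<alpha> (induced D (X \<inter> univ D))
    + delta \<alpha> (induced C (univ C \<inter> g -` X)) - delta \<alpha> (induced D (X \<inter> univ B))"
proof -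
  let ?A = "free_amalgam D C g" and ?Y = "univ C \<inter> g -` X"
  have "delta \<alpha> (induced ?A X) = delta \<alpha> (induced ?A (X \<inter> univ D))
      + delta \<alpha> (induced ?A (X \<inter> g ` univ C)) - delta \<alpha> (induced ?A (X \<inter> univ D \<inter> g ` univ C))"
  proof (rule delta_free_split)
    show "finite X"
      using assms in_KL_finite[OF in_KL_amalgam] finite_subset by blast
    show "X \<subseteq> univ D \<union> g ` univ C"
      using assms by simp
  next
    fix E S assume "S \<in> rel ?A E"
    moreover have "rel C E \<subseteq> Pow (univ C)" "rel D E \<subseteq> Pow (univ D)"
      by (rule in_KL_rel_Pow[OF in_KL_C], rule in_KL_rel_Pow[OF in_KL_D])
    ultimately show "S \<subseteq> univ D \<or> S \<subseteq> g ` univ C"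
      by auto
  qed
  moreover have "X \<inter> univ D \<inter> g ` univ C = X \<inter> univ B"
    using g_fresh by blast
  moreover have "X \<inter> g ` univ C = g ` ?Y"
    by blast
  moreover have "delta \<alpha> (induced ?A (g ` ?Y)) = delta \<alpha> (induced C ?Y)"
    by (rule delta_image[OF inj_g]) (use in_KL_rel_Pow[OF in_KL_C] rel_amalgam_copy in auto)
  ultimately show ?thesis
    using induced_amalgam_D B_subset_D by (metis Int_lower2 inf.coboundedI2)
qed

end

(* The properties of the free amalgam of n copies of C over B that the argument uses;
   such structures are characterised by them rather than constructed explicitly. *)
definition iterated_amalgam ::
  "('l \<Rightarrow> nat) \<Rightarrow> ('l::finite \<Rightarrow> real) \<Rightarrow> ('a, 'l) struct \<Rightarrow> ('a, 'l) struct \<Rightarrow> nat \<Rightarrow> ('a, 'l) struct \<Rightarrow> bool"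
where
  "iterated_amalgam ar \<alpha> B C n D \<longleftrightarrow> in_KL ar D \<and> substr B D \<and>
     delta \<alpha> D = delta \<alpha> B - real n * (delta \<alpha> B - delta \<alpha> C) \<and>
     (\<forall>X. univ B \<subseteq> X \<and> X \<subseteq> univ D \<longrightarrow> delta \<alpha> D \<le> delta \<alpha> (induced D X)) \<and>
     (\<forall>X. univ B \<subseteq> X \<and> X \<subset> univ D \<longrightarrow>
        delta \<alpha> D + (delta \<alpha> B - delta \<alpha> C) \<le> delta \<alpha> (induced D X)) \<and>
     (\<forall>X. X \<subseteq> univ D \<and> \<not> univ B \<subseteq> X \<longrightarrow>
        delta \<alpha> (induced D (X \<inter> univ B)) \<le> delta \<alpha> (induced D X)) \<and>
     (\<forall>X. univ B \<subseteq> X \<and> X \<subseteq> univ D \<and> delta \<alpha> (induced D X) < delta \<alpha> B \<longrightarrow>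
        card (univ C) \<le> card X)"

lemma iterated_amalgamD:
  assumes "iterated_amalgam ar \<alpha> B C n D"
  shows "in_KL ar D" "substr B D"
    "delta \<alpha> D = delta \<alpha> B - real n * (delta \<alpha> B - delta \<alpha> C)"
    "\<And>X. univ B \<subseteq> X \<Longrightarrow> X \<subseteq> univ D \<Longrightarrow> delta \<alpha> D \<le> delta \<alpha> (induced D X)"
    "\<And>X. univ B \<subseteq> X \<Longrightarrow> X \<subset> univ D \<Longrightarrow>
      delta \<alpha> D + (delta \<alpha> B - delta \<alpha> C) \<le> delta \<alpha> (induced D X)"
    "\<And>X. X \<subseteq> univ D \<Longrightarrow> \<not> univ B \<subseteq> X \<Longrightarrow>
      delta \<alpha> (induced D (X \<inter> univ B)) \<le> delta \<alpha> (induced D X)"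
    "\<And>X. univ B \<subseteq> X \<Longrightarrow> X \<subseteq> univ D \<Longrightarrow> delta \<alpha> (induced D X) < delta \<alpha> B \<Longrightarrow>
      card (univ C) \<le> card X"
  using assms unfolding iterated_amalgam_def by (metis psubset_eq)+

lemma iterated_amalgam_0: "in_KL ar B \<Longrightarrow> iterated_amalgam ar \<alpha> B C 0 B"
  unfolding iterated_amalgam_def
  by (auto simp: substr_refl induced_univ_in_KL Int_absorb2 dest: subset_antisym)

locale amalgam_step = fresh_copy ar B C D g
  for ar :: "'l::finite \<Rightarrow> nat" and B C D :: "('a, 'l) struct" and g +
  fixes \<alpha> :: "'l \<Rightarrow> real" and n :: nat
  assumes essential: "essential_minimal_pair ar \<alpha> B C"
    and tower: "iterated_amalgam ar \<alpha> B C n D"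
begin

abbreviation amalgam where "amalgam \<equiv> free_amalgam D C g"

abbreviation copy_part where "copy_part X \<equiv> univ C \<inter> g -` X"

lemma minimal: "minimal_pair \<alpha> B C"
  using essential unfolding essential_minimal_pair_def by blast

lemma delta_C_less: "delta \<alpha> C < delta \<alpha> B"
  by (rule essential_minimal_pair_gap(2)[OF essential])

lemma copy_part_inter_B: "copy_part X \<inter> univ B = X \<inter> univ B"
  using g_fixes_B B_subset_C by auto

lemma delta_C_eq_D: "Z \<subseteq> univ B \<Longrightarrow> delta \<alpha> (induced C Z) = delta \<alpha> (induced D Z)"
  using substr_induced[OF substr_B_C] substr_induced[OF substr_B_D] by simp

lemma copy_part_proper:
  assumes "univ B \<subseteq> X" "copy_part X \<noteq> univ C"
  shows "delta \<alpha> B \<le> delta \<alpha> (induced C (copy_part X))"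
  using assms g_fixes_B B_subset_C by (intro minimal_pair_proper[OF minimal]) auto

lemma copy_part_lower:
  assumes "univ B \<subseteq> X"
  shows "delta \<alpha> C \<le> delta \<alpha> (induced C (copy_part X))"
proof (cases "copy_part X = univ C")
  case True
  then show ?thesis
    by (simp add: induced_univ_in_KL[OF in_KL_C])
next
  case False
  then show ?thesis
    using copy_part_proper[OF assms] delta_C_less by linarith
qed

lemma delta_amalgam_over_B:
  assumes "univ B \<subseteq> X" "X \<subseteq> univ amalgam"
  shows "delta \<alpha> (induced amalgam X) =
    delta \<alpha> (induced D (X \<inter> univ D)) + delta \<alpha> (induced C (copy_part X)) - delta \<alpha> B"
proof -
  have "X \<inter> univ B = univ B"
    using assms(1) by blast
  then show ?thesis
    using delta_amalgam[OF assms(2)] substr_induced_univ[OF substr_B_D] by simp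
qed

lemma delta_amalgam_univ: "delta \<alpha> amalgam = delta \<alpha> D - (delta \<alpha> B - delta \<alpha> C)"
proof -
  have "univ B \<subseteq> univ amalgam"
    using B_subset_D by auto
  moreover have "univ amalgam \<inter> univ D = univ D" "copy_part (univ amalgam) = univ C"
    by auto
  ultimately show ?thesis
    using delta_amalgam_over_B[of "univ amalgam"] induced_univ_in_KL[OF in_KL_amalgam]
      induced_univ_in_KL[OF in_KL_C] induced_univ_in_KL[OF in_KL_D]
    by simp
qed

lemma amalgam_lower:
  assumes "univ B \<subseteq> X" "X \<subseteq> univ amalgam"
  shows "delta \<alpha> amalgam \<le> delta \<alpha> (induced amalgam X)"
proof -
  have "delta \<alpha> D \<le> delta \<alpha> (induced D (X \<inter> univ D))"
    using assms(1) B_subset_D by (intro iterated_amalgamD(4)[OF tower]) auto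
  then show ?thesis
    using delta_amalgam_over_B[OF assms] copy_part_lower[OF assms(1)] delta_amalgam_univ
    by linarith
qed

lemma amalgam_lower_proper:
  assumes "univ B \<subseteq> X" "X \<subset> univ amalgam"
  shows "delta \<alpha> amalgam + (delta \<alpha> B - delta \<alpha> C) \<le> delta \<alpha> (induced amalgam X)"
proof (cases "X \<inter> univ D = univ D")
  case True
  then have "copy_part X \<noteq> univ C"
    using assms(2) by auto
  then show ?thesis
    using delta_amalgam_over_B[of X] assms True copy_part_proper[OF assms(1)] delta_amalgam_univ
      induced_univ_in_KL[OF in_KL_D]
    by auto
next
  case False
  then have "delta \<alpha> D + (delta \<alpha> B - delta \<alpha> C) \<le> delta \<alpha> (induced D (X \<inter> univ D))"
    using assms(1) B_subset_D by (intro iterated_amalgamD(5)[OF tower]) auto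
  then show ?thesis
    using delta_amalgam_over_B[of X] assms copy_part_lower[OF assms(1)] delta_amalgam_univ
    by auto
qed

lemma amalgam_off_B:
  assumes "X \<subseteq> univ amalgam" "\<not> univ B \<subseteq> X"
  shows "delta \<alpha> (induced amalgam (X \<inter> univ B)) \<le> delta \<alpha> (induced amalgam X)"
proof -
  have "X \<inter> univ D \<inter> univ B = X \<inter> univ B"
    using B_subset_D by blast
  then have "delta \<alpha> (induced D (X \<inter> univ B)) \<le> delta \<alpha> (induced D (X \<inter> univ D))"
    using iterated_amalgamD(6)[OF tower, of "X \<inter> univ D"] assms(2) by auto
  moreover have "copy_part X \<subset> univ C"
    using assms(2) copy_part_inter_B[of X] B_subset_C by blast
  then have "delta \<alpha> (induced C (copy_part X \<inter> univ B)) \<le> delta \<alpha> (induced C (copy_part X))"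
    by (rule essential_minimal_pair_inter[OF essential])
  then have "delta \<alpha> (induced D (X \<inter> univ B)) \<le> delta \<alpha> (induced C (copy_part X))"
    using copy_part_inter_B[of X] delta_C_eq_D[of "X \<inter> univ B"] by simp
  moreover have "induced amalgam (X \<inter> univ B) = induced D (X \<inter> univ B)"
    using B_subset_D by (intro induced_amalgam_D) blast
  ultimately show ?thesis
    using delta_amalgam[OF assms(1)] by simp
qed

lemma amalgam_card:
  assumes "univ B \<subseteq> X" "X \<subseteq> univ amalgam" "delta \<alpha> (induced amalgam X) < delta \<alpha> B"
  shows "card (univ C) \<le> card X"
proof -
  have fin: "finite X"
    using assms(2) in_KL_finite[OF in_KL_amalgam] finite_subset by blast
  show ?thesis
  proof (cases "delta \<alpha> (induced D (X \<inter> univ D)) < delta \<alpha> B")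
    case True
    then have "card (univ C) \<le> card (X \<inter> univ D)"
      using assms(1) B_subset_D by (intro iterated_amalgamD(7)[OF tower]) auto
    also have "\<dots> \<le> card X"
      using fin by (simp add: card_mono)
    finally show ?thesis .
  next
    case False
    then have "\<not> delta \<alpha> B \<le> delta \<alpha> (induced C (copy_part X))"
      using delta_amalgam_over_B[OF assms(1,2)] assms(3) by linarith
    then have "g ` univ C \<subseteq> X"
      using copy_part_proper[OF assms(1)] by blast
    then have "card (g ` univ C) \<le> card X"
      using fin by (simp add: card_mono)
    then show ?thesis
      using inj_g by (simp add: card_image)
  qed
qed

lemma iterated_amalgam_Suc: "iterated_amalgam ar \<alpha> B C (Suc n) amalgam"
  unfolding iterated_amalgam_def
  using in_KL_amalgam substr_B_amalgam delta_amalgam_univ iterated_amalgamD(3)[OF tower]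
    amalgam_lower amalgam_lower_proper amalgam_off_B amalgam_card
  by (auto simp: algebra_simps)

end

lemma iterated_amalgam_exists:
  assumes "infinite (UNIV :: 'a set)" "essential_minimal_pair ar \<alpha> B C"
  shows "\<exists>D :: ('a, 'l::finite) struct. iterated_amalgam ar \<alpha> B C n D"
proof (induction n)
  case 0
  have "in_KL ar B"
    using assms(2) unfolding essential_minimal_pair_def in_K_alpha_def by blast
  then show ?case
    using iterated_amalgam_0 by blast
next
  case (Suc n)
  then obtain D where D: "iterated_amalgam ar \<alpha> B C n D"
    by blast
  have C: "in_KL ar C" "substr B C"
    using assms(2) unfolding essential_minimal_pair_def in_K_alpha_def by blast+
  obtain g where g: "inj_on g (univ C)" "\<forall>b\<in>univ B. g b = b" "g ` univ C \<inter> univ D = univ B"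
    using exists_fresh_copy[OF assms(1)] substr_univ_subset[OF C(2)]
      substr_univ_subset[OF iterated_amalgamD(2)[OF D]]
      in_KL_finite[OF C(1)] in_KL_finite[OF iterated_amalgamD(1)[OF D]]
    by metis
  have "amalgam_step ar B C D g \<alpha> n"
    by unfold_locales (use C D g assms(2) iterated_amalgamD(1,2)[OF D] in auto)
  then show ?case
    using amalgam_step.iterated_amalgam_Suc by blast
qed

lemma iterated_amalgam_delta_rel:
  assumes "iterated_amalgam ar \<alpha> B C n D" "strong \<alpha> A B"
  shows "delta_rel \<alpha> D (univ D) (univ A) = delta \<alpha> D - delta \<alpha> A"
  using delta_rel_univ iterated_amalgamD(1,2)[OF assms(1)] substr_trans strong_substr[OF assms(2)]
  by metis

lemma iterated_amalgam_off_B: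
  assumes tower: "iterated_amalgam ar \<alpha> B C n D" and "strong \<alpha> A B"
    and "univ A \<subseteq> X" "X \<subseteq> univ D" "\<not> univ B \<subseteq> X"
  shows "delta \<alpha> A \<le> delta \<alpha> (induced D X)"
proof -
  have "delta \<alpha> A \<le> delta \<alpha> (induced B (X \<inter> univ B))"
    using assms(2,3) strong_univ_subset[OF assms(2)] by (intro strongD) auto
  also have "\<dots> = delta \<alpha> (induced D (X \<inter> univ B))"
    using substr_induced[OF iterated_amalgamD(2)[OF tower]] by simp
  also have "\<dots> \<le> delta \<alpha> (induced D X)"
    using iterated_amalgamD(6)[OF tower] assms(4,5) by blast
  finally show ?thesis .
qed

lemma iterated_amalgam_strong:
  assumes tower: "iterated_amalgam ar \<alpha> B C n D" and "strong \<alpha> A B"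
    and "delta \<alpha> A \<le> delta \<alpha> D"
  shows "strong \<alpha> A D"
  unfolding strong_def
proof (intro conjI allI impI)
  show "substr A D"
    using strong_substr[OF assms(2)] iterated_amalgamD(2)[OF tower] by (rule substr_trans)
  fix X assume X: "univ A \<subseteq> X \<and> X \<subseteq> univ D"
  show "delta \<alpha> A \<le> delta \<alpha> (induced D X)"
  proof (cases "univ B \<subseteq> X")
    case True
    then have "delta \<alpha> D \<le> delta \<alpha> (induced D X)"
      using iterated_amalgamD(4)[OF tower] X by blast
    then show ?thesis
      using assms(3) by linarith
  next
    case False
    then show ?thesis
      using iterated_amalgam_off_B[OF tower assms(2)] X by blast
  qed
qed

lemma iterated_amalgam_in_K_alpha:
  assumes tower: "iterated_amalgam ar \<alpha> B C n D" and "in_K_alpha ar \<alpha> B" "0 \<le> delta \<alpha> D"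
  shows "in_K_alpha ar \<alpha> D"
  unfolding in_K_alpha_def
proof (intro conjI allI impI)
  show "in_KL ar D"
    using tower by (rule iterated_amalgamD(1))
  fix X assume X: "X \<subseteq> univ D"
  show "0 \<le> delta \<alpha> (induced D X)"
  proof (cases "univ B \<subseteq> X")
    case True
    then show ?thesis
      using iterated_amalgamD(4)[OF tower True X] assms(3) by linarith
  next
    case False
    have "0 \<le> delta \<alpha> (induced B (X \<inter> univ B))"
      using assms(2) unfolding in_K_alpha_def by blast
    also have "\<dots> = delta \<alpha> (induced D (X \<inter> univ B))"
      using substr_induced[OF iterated_amalgamD(2)[OF tower]] by simp
    also have "\<dots> \<le> delta \<alpha> (induced D X)"
      using iterated_amalgamD(6)[OF tower X False] .
    finally show ?thesis .
  qed
qed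

lemma iterated_amalgam_no_small_embedding:
  assumes tower: "iterated_amalgam ar \<alpha> B C n D"
    and "in_KL ar G" "minimal_pair \<alpha> B G" "card (univ G) < card (univ C)"
  shows "\<not> embeds_over ar B G D"
proof
  assume embeds: "embeds_over ar B G D"
  have "substr B G" "\<not> strong \<alpha> B G"
    using assms(3) unfolding minimal_pair_def by blast+
  then obtain X where X: "univ B \<subseteq> X" "X \<subseteq> univ G" "delta \<alpha> (induced G X) < delta \<alpha> B"
    by (rule not_strongE)
  obtain Y where Y: "univ B \<subseteq> Y" "Y \<subseteq> univ D" "card Y = card X"
    "delta \<alpha> (induced D Y) = delta \<alpha> (induced G X)"
    using embeds_over_image[OF assms(2) iterated_amalgamD(1)[OF tower] embeds X(1,2)] .
  have "card (univ C) \<le> card Y"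
    using iterated_amalgamD(7)[OF tower Y(1,2)] X(3) Y(4) by simp
  moreover have "card X \<le> card (univ G)"
    using X(2) in_KL_finite[OF assms(2)] by (rule card_mono[rotated])
  ultimately show False
    using Y(3) assms(4) by linarith
qed

lemma iterated_amalgam_inter_A:
  assumes tower: "iterated_amalgam ar \<alpha> B C n D" and "strong \<alpha> A B" and nonneg: "\<And>E. 0 \<le> \<alpha> E"
    and "X \<subseteq> univ D" "\<not> univ B \<subseteq> X"
  shows "delta \<alpha> (induced D (X \<inter> univ A)) \<le> delta \<alpha> (induced D X)"
proof -
  let ?Z = "X \<inter> univ B"
  have AB: "univ A \<subseteq> univ B"
    using assms(2) by (rule strong_univ_subset)
  have fin: "finite ?Z" "finite (univ A)"
    using in_KL_finite[OF iterated_amalgamD(1)[OF tower]] substr_univ_subset[OF iterated_amalgamD(2)[OF tower]]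
      AB assms(4) by (auto intro: finite_subset)
  have "delta \<alpha> A \<le> delta \<alpha> (induced B (?Z \<union> univ A))"
    using AB by (intro strongD[OF assms(2)]) auto
  moreover have "delta \<alpha> (induced B (?Z \<union> univ A)) + delta \<alpha> (induced B (?Z \<inter> univ A))
      \<le> delta \<alpha> (induced B ?Z) + delta \<alpha> (induced B (univ A))"
    using delta_submodular[OF nonneg fin] .
  moreover have "induced B (univ A) = A"
    using strong_substr[OF assms(2)] by (rule substr_induced_univ)
  moreover have "?Z \<inter> univ A = X \<inter> univ A"
    using AB by blast
  ultimately have "delta \<alpha> (induced B (X \<inter> univ A)) \<le> delta \<alpha> (induced B ?Z)"
    by simp
  moreover have "induced B W = induced D W" if "W \<subseteq> univ B" for W
    using substr_induced[OF iterated_amalgamD(2)[OF tower] that] by simp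
  moreover have "delta \<alpha> (induced D ?Z) \<le> delta \<alpha> (induced D X)"
    using iterated_amalgamD(6)[OF tower assms(4,5)] .
  ultimately show ?thesis
    using AB by (metis Int_lower2 inf.coboundedI2 order_trans)
qed

lemma iterated_amalgam_essential:
  assumes tower: "iterated_amalgam ar \<alpha> B C n D"
    and "in_K_alpha ar \<alpha> A" "strong \<alpha> A B" "in_K_alpha ar \<alpha> D" "\<And>E. 0 \<le> \<alpha> E"
    and "delta \<alpha> D < delta \<alpha> A" "delta \<alpha> A \<le> delta \<alpha> D + (delta \<alpha> B - delta \<alpha> C)"
  shows "essential_minimal_pair ar \<alpha> A D"
proof -
  have KD: "in_KL ar D" and AD: "substr A D"
    using iterated_amalgamD(1)[OF tower]
      substr_trans[OF strong_substr[OF assms(3)] iterated_amalgamD(2)[OF tower]] .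
  have proper: "delta \<alpha> A \<le> delta \<alpha> (induced D X)" if "univ A \<subseteq> X" "X \<subset> univ D" for X
  proof (cases "univ B \<subseteq> X")
    case True
    then show ?thesis
      using iterated_amalgamD(5)[OF tower True that(2)] assms(7) by linarith
  next
    case False
    then show ?thesis
      using iterated_amalgam_off_B[OF tower assms(3) that(1)] that(2) by blast
  qed
  have "delta \<alpha> (induced D (X \<inter> univ A)) \<le> delta \<alpha> (induced D X)" if "X \<subset> univ D" for X
  proof (cases "univ B \<subseteq> X")
    case True
    then have "X \<inter> univ A = univ A"
      using strong_univ_subset[OF assms(3)] by blast
    then show ?thesis
      using proper[of X] True that strong_univ_subset[OF assms(3)] substr_induced_univ[OF AD]
      by auto
  next
    case False
    then show ?thesis
      using iterated_amalgam_inter_A[OF tower assms(3,5)] that by blast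
  qed
  then have "\<forall>X. X \<subset> univ D \<longrightarrow> delta_rel \<alpha> D X (X \<inter> univ A) \<ge> 0"
    unfolding delta_rel_def by (simp add: Un_absorb2)
  moreover have "minimal_pair \<alpha> A D"
    using minimal_pairI[OF KD AD proper assms(6)] .
  moreover have "0 < delta \<alpha> A"
    using in_K_alpha_delta_nonneg[OF assms(4)] assms(6) by linarith
  ultimately show ?thesis
    unfolding essential_minimal_pair_def using assms(2,4) AD by blast
qed

lemma exists_nat_bracket:
  fixes t \<gamma> :: real
  assumes "0 \<le> t" "0 < \<gamma>"
  shows "\<exists>k :: nat. real k * \<gamma> \<le> t \<and> t < (real k + 1) * \<gamma>"
proof -
  define k where "k = nat \<lfloor>t / \<gamma>\<rfloor>"
  have "real k = of_int \<lfloor>t / \<gamma>\<rfloor>"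
    using assms unfolding k_def by simp
  then have "real k \<le> t / \<gamma>" "t / \<gamma> < real k + 1"
    by linarith+
  then show ?thesis
    using assms(2) by (auto simp: pos_le_divide_eq pos_divide_less_eq)
qed

theorem lemma3p32:
  fixes ar :: "'l::finite \<Rightarrow> nat" and \<alpha> :: "'l \<Rightarrow> real"
    and A B C :: "('a, 'l) struct"
  assumes inf: "infinite (UNIV :: 'a set)"
    and ar2: "\<forall>E. ar E \<ge> 2"
    and alpha_range: "\<forall>E. 0 < \<alpha> E \<and> \<alpha> E \<le> 1"
    and not_binary_one: "\<not> (\<forall>E. ar E = 2 \<and> \<alpha> E = 1)"
    and KA: "in_K_alpha ar \<alpha> A" and KB: "in_K_alpha ar \<alpha> B"
    and AB: "strong \<alpha> A B"
    and BC: "essential_minimal_pair ar \<alpha> B C"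
  defines "\<gamma> \<equiv> - delta_rel \<alpha> C (univ C) (univ B)"
  shows "(\<exists>D. in_K_alpha ar \<alpha> D \<and> substr B D \<and> strong \<alpha> A D \<and>
            0 \<le> delta_rel \<alpha> D (univ D) (univ A) \<and> delta_rel \<alpha> D (univ D) (univ A) < \<gamma> \<and>
            (\<forall>G. in_KL ar G \<and> minimal_pair \<alpha> B G \<and> card (univ G) < card (univ C)
                 \<longrightarrow> \<not> embeds_over ar B G D))
       \<and> (delta \<alpha> A \<ge> \<gamma> \<longrightarrow>
            (\<exists>D. in_K_alpha ar \<alpha> D \<and> substr B D \<and> essential_minimal_pair ar \<alpha> A D \<and>
                 delta_rel \<alpha> D (univ D) (univ A) < 0 \<and> delta_rel \<alpha> D (univ D) (univ A) \<ge> - \<gamma>))"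
proof -
  have \<gamma>: "\<gamma> = delta \<alpha> B - delta \<alpha> C" and "0 < \<gamma>"
    using essential_minimal_pair_gap[OF BC] unfolding \<gamma>_def by simp_all
  moreover have "0 \<le> delta \<alpha> B - delta \<alpha> A"
    using strong_delta_le[of ar B \<alpha> A] AB KB unfolding in_K_alpha_def by simp
  ultimately obtain k :: nat where k:
    "real k * \<gamma> \<le> delta \<alpha> B - delta \<alpha> A" "delta \<alpha> B - delta \<alpha> A < (real k + 1) * \<gamma>"
    using exists_nat_bracket by blast
  obtain D D' where D: "iterated_amalgam ar \<alpha> B C k D" and D': "iterated_amalgam ar \<alpha> B C (Suc k) D'"
    using iterated_amalgam_exists[OF inf BC] by meson
  have dD: "delta \<alpha> D = delta \<alpha> B - real k * \<gamma>" and dD': "delta \<alpha> D' = delta \<alpha> D - \<gamma>"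
    using iterated_amalgamD(3)[OF D] iterated_amalgamD(3)[OF D'] unfolding \<gamma>
    by (simp_all add: algebra_simps)
  show ?thesis
  proof (intro conjI impI exI)
    show "in_K_alpha ar \<alpha> D" "strong \<alpha> A D" "substr B D"
      using iterated_amalgam_in_K_alpha[OF D KB] iterated_amalgam_strong[OF D AB]
        iterated_amalgamD(2)[OF D] in_K_alpha_delta_nonneg[OF KA] dD k(1) by simp_all
    show "0 \<le> delta_rel \<alpha> D (univ D) (univ A)" "delta_rel \<alpha> D (univ D) (univ A) < \<gamma>"
      using iterated_amalgam_delta_rel[OF D AB] dD k by (simp_all add: algebra_simps)
    show "\<forall>G. in_KL ar G \<and> minimal_pair \<alpha> B G \<and> card (univ G) < card (univ C)
        \<longrightarrow> \<not> embeds_over ar B G D"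
      using iterated_amalgam_no_small_embedding[OF D] by blast
  next
    assume "\<gamma> \<le> delta \<alpha> A"
    then have KD': "in_K_alpha ar \<alpha> D'"
      using iterated_amalgam_in_K_alpha[OF D' KB] dD dD' k(1) by simp
    moreover have "\<And>E. 0 \<le> \<alpha> E"
      using alpha_range by (simp add: less_imp_le)
    ultimately show "in_K_alpha ar \<alpha> D'" "substr B D'" "essential_minimal_pair ar \<alpha> A D'"
      using iterated_amalgam_essential[OF D' KA AB] iterated_amalgamD(2)[OF D'] dD dD' k \<gamma>
      by (simp_all add: algebra_simps)
    show "delta_rel \<alpha> D' (univ D') (univ A) < 0" "- \<gamma> \<le> delta_rel \<alpha> D' (univ D') (univ A)"
      using iterated_amalgam_delta_rel[OF D' AB] dD dD' k by (simp_all add: algebra_simps)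
  qed
qed

end
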